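(* Let $(\Omega,\mathcal F,\mu)$ be a measure space, $p\in[1,\infty)$ and $k\ge1$. Then (i) $\mathscr G_{p,k}\subset\{f\in L^p:\ \mathrm{Var}_{p,k}(f)=0\}\subset\mathscr G_{p,k+1}$; (ii) if $\mu$ has no atoms of infinite measure, then $\{f\in L^p:\ \mathrm{Var}_{p,k}(f)=0\}=\mathscr G_{p,k}$.
   Context: All measures are assumed not identically zero. $\mathscr G_{p,k}$ is the set of functions $\sum_{i=1}^l a_i\mathbf 1_{A_i}\in L^p$ with $l\le k$, $\{A_i\}$ a measurable partition of $\Omega$, $a_i\in\mathbb R$ (as a subset of $L^p$). $p$-variation: for measurable $A$ with $\mu(A)<\infty$, $\mathrm{var}_p(f,A)^p=\frac1{\mu(A)}\int_{A\times A}|f(x)-f(y)|^p\,d\mu(x)d\mu(y)$ if $\mu(A)>0$ and $0$ otherwise; for a finite collection $\mathcal P=(A_i)$ of disjoint measurable sets of finite measure, $\mathrm{var}_p(f,\mathcal P)=(\sum_i\mathrm{var}_p(f,A_i)^p)^{1/p}$; $\mathrm{Var}_{p,k}(f,A)=\inf\{\mathrm{var}_p(f,\mathcal P):\ \mathcal P$ a measurable partition of $A$ with at most $k$ sets$\}$; $\mathrm{Var}_{p,k}(f)=\sup\{\mathrm{Var}_{p,k}(f,A):\ A\in\mathcal F,\ \mu(A)<\infty\}$. An atom is a measurable $A$ with $\mu(A)>0$ such that every measurable $B\subset A$ with $\mu(B)<\mu(A)$ satisfies $\mu(B)=0$. *)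

theory Defs
  imports "HOL-Analysis.Analysis"
begin

definition enn_root :: "real \<Rightarrow> ennreal \<Rightarrow> ennreal" where
  "enn_root p x = (if x = \<infinity> then \<infinity> else ennreal (enn2real x powr (1 / p)))"

text \<open>Membership in L^p (functions, not classes; everything below is a.e.-invariant).\<close>
definition Lp :: "'a measure \<Rightarrow> real \<Rightarrow> ('a \<Rightarrow> real) \<Rightarrow> bool" where
  "Lp M p f \<longleftrightarrow> f \<in> borel_measurable M \<and> integrable M (\<lambda>x. \<bar>f x\<bar> powr p)"

definition Gset :: "'a measure \<Rightarrow> real \<Rightarrow> nat \<Rightarrow> ('a \<Rightarrow> real) set" where
  "Gset M p k = {f. Lp M p f \<and>
     (\<exists>l \<le> k. \<exists>A :: nat \<Rightarrow> 'a set. \<exists>a :: nat \<Rightarrow> real.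
        (\<forall>i<l. A i \<in> sets M) \<and> disjoint_family_on A {..<l} \<and> (\<Union>i<l. A i) = space M \<and>
        (AE x in M. f x = (\<Sum>i<l. a i * indicator (A i) x)))}"

definition varp_pow :: "'a measure \<Rightarrow> real \<Rightarrow> ('a \<Rightarrow> real) \<Rightarrow> 'a set \<Rightarrow> ennreal" where
  "varp_pow M p f A =
     (if emeasure M A > 0 then
        (\<integral>\<^sup>+ x. (\<integral>\<^sup>+ y. indicator (A \<times> A) (x, y) * ennreal (\<bar>f x - f y\<bar> powr p) \<partial>M) \<partial>M)
          / emeasure M A
      else 0)"

definition varp :: "'a measure \<Rightarrow> real \<Rightarrow> ('a \<Rightarrow> real) \<Rightarrow> 'a set \<Rightarrow> ennreal" where
  "varp M p f A = enn_root p (varp_pow M p f A)"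

definition varp_fam :: "'a measure \<Rightarrow> real \<Rightarrow> ('a \<Rightarrow> real) \<Rightarrow> nat \<Rightarrow> (nat \<Rightarrow> 'a set) \<Rightarrow> ennreal" where
  "varp_fam M p f l P = enn_root p (\<Sum>i<l. varp_pow M p f (P i))"

definition Varpk_on :: "'a measure \<Rightarrow> real \<Rightarrow> nat \<Rightarrow> ('a \<Rightarrow> real) \<Rightarrow> 'a set \<Rightarrow> ennreal" where
  "Varpk_on M p k f A = (INF (l, P) \<in> {(l, P). l \<le> k \<and> (\<forall>i<l. P i \<in> sets M) \<and>
       disjoint_family_on P {..<l} \<and> (\<Union>i<l. P i) = A}. varp_fam M p f l P)"

definition Varpk :: "'a measure \<Rightarrow> real \<Rightarrow> nat \<Rightarrow> ('a \<Rightarrow> real) \<Rightarrow> ennreal" where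
  "Varpk M p k f = (SUP A \<in> {A \<in> sets M. emeasure M A < \<infinity>}. Varpk_on M p k f A)"

definition is_atom :: "'a measure \<Rightarrow> 'a set \<Rightarrow> bool" where
  "is_atom M A \<longleftrightarrow> A \<in> sets M \<and> emeasure M A > 0 \<and>
     (\<forall>B \<in> sets M. B \<subseteq> A \<and> emeasure M B < emeasure M A \<longrightarrow> emeasure M B = 0)"

end

theory Submission
  imports Defs
begin

text \<open>A step function with at most k values is a.e. constant on each cell of the partition it
  induces, so every set of finite measure splits into at most k cells of zero variation.
  Conversely, suppose f has k+1 separated value clusters, i.e. sets of positive finite measure on
  which f stays close to k+1 distinct values (the nonzero points of the essential range qualify by
  Chebyshev's inequality). In any partition of their union into at most k cells, the pigeonhole
  principle puts a substantial part of two different clusters into the same cell, which forces a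
  positive lower bound on the variation. Hence Var_{p,k}(f) = 0 allows at most k nonzero essential
  values, plus possibly the value 0. Without atoms of infinite measure the level set of 0 contains
  a piece of positive finite measure whenever it is not null, so it is itself a cluster and at most
  k values occur in total.\<close>

lemma enn_root_zero [simp]: "enn_root p 0 = 0"
  by (simp add: enn_root_def)

lemma ennreal_powr_le_enn_root:
  assumes "0 < c" "ennreal c \<le> x" "0 < p"
  shows "ennreal (c powr (1/p)) \<le> enn_root p x"
proof (cases "x = \<infinity>")
  case True
  then show ?thesis by (simp add: enn_root_def)
next
  case False
  then obtain r where r: "x = ennreal r" "0 \<le> r" by (cases x) auto
  with assms have "c powr (1/p) \<le> r powr (1/p)"
    by (intro powr_mono2) (auto simp: ennreal_le_iff)
  then show ?thesis using r False by (simp add: enn_root_def)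
qed

lemma nn_integral_square_ge_separated:
  fixes f :: "'a \<Rightarrow> real"
  assumes p: "0 < p" and C: "C \<in> sets M" "C \<subseteq> P" and D: "D \<in> sets M" "D \<subseteq> P"
    and d: "0 \<le> d" "\<And>x y. x \<in> C \<Longrightarrow> y \<in> D \<Longrightarrow> d \<le> \<bar>f x - f y\<bar>"
  shows "ennreal (d powr p) * emeasure M D * emeasure M C \<le>
    (\<integral>\<^sup>+ x. (\<integral>\<^sup>+ y. indicator (P \<times> P) (x, y) * ennreal (\<bar>f x - f y\<bar> powr p) \<partial>M) \<partial>M)"
proof -
  have "ennreal (d powr p) * emeasure M D * emeasure M C
      = (\<integral>\<^sup>+ x. (ennreal (d powr p) * emeasure M D) * indicator C x \<partial>M)"
    using nn_integral_cmult_indicator[OF C(1)] by simp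
  also have "\<dots> = (\<integral>\<^sup>+ x. (\<integral>\<^sup>+ y. ennreal (d powr p) * indicator C x * indicator D y \<partial>M) \<partial>M)"
  proof (intro nn_integral_cong)
    fix x
    show "ennreal (d powr p) * emeasure M D * indicator C x
        = (\<integral>\<^sup>+ y. ennreal (d powr p) * indicator C x * indicator D y \<partial>M)"
      using nn_integral_cmult_indicator[OF D(1), of "ennreal (d powr p) * indicator C x"]
      by (simp add: mult_ac)
  qed
  also have "\<dots> \<le> (\<integral>\<^sup>+ x. (\<integral>\<^sup>+ y. indicator (P \<times> P) (x, y) * ennreal (\<bar>f x - f y\<bar> powr p) \<partial>M) \<partial>M)"
  proof (intro nn_integral_mono)
    fix x y
    show "ennreal (d powr p) * indicator C x * indicator D y
       \<le> indicator (P \<times> P) (x, y) * ennreal (\<bar>f x - f y\<bar> powr p)"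
    proof (cases "x \<in> C \<and> y \<in> D")
      case True
      then have "d powr p \<le> \<bar>f x - f y\<bar> powr p" using d p by (intro powr_mono2) auto
      then show ?thesis using True C D by (auto simp: indicator_def ennreal_leI)
    qed (auto simp: indicator_def)
  qed
  finally show ?thesis .
qed

lemma varp_pow_ge_separated:
  fixes f :: "'a \<Rightarrow> real"
  assumes p: "0 < p" and P: "P \<in> sets M" "emeasure M P < \<infinity>"
    and C: "C \<in> sets M" "C \<subseteq> P" "0 < measure M C" and D: "D \<in> sets M" "D \<subseteq> P"
    and d: "0 \<le> d" "\<And>x y. x \<in> C \<Longrightarrow> y \<in> D \<Longrightarrow> d \<le> \<bar>f x - f y\<bar>"
  shows "ennreal (d powr p * measure M C * measure M D / measure M P) \<le> varp_pow M p f P"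
proof -
  have fin: "emeasure M X = ennreal (measure M X)" if "X \<in> sets M" "X \<subseteq> P" for X
    using emeasure_mono[OF that(2) P(1)] P(2) that(1)
    by (intro emeasure_eq_ennreal_measure) (auto simp: top_unique)
  have "measure M C \<le> measure M P"
    using C P by (intro measure_mono_fmeasurable) (auto simp: fmeasurable_def)
  then have mP: "0 < measure M P" using C(3) by linarith
  define I where "I = (\<integral>\<^sup>+ x. (\<integral>\<^sup>+ y. indicator (P \<times> P) (x, y) * ennreal (\<bar>f x - f y\<bar> powr p) \<partial>M) \<partial>M)"
  have "ennreal (d powr p * measure M C * measure M D)
      = ennreal (d powr p) * emeasure M D * emeasure M C"
    using fin[OF C(1,2)] fin[OF D] by (simp add: ennreal_mult mult_ac)
  also have "\<dots> \<le> I"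
    unfolding I_def using p C D d by (intro nn_integral_square_ge_separated) auto
  finally have "ennreal (d powr p * measure M C * measure M D) / ennreal (measure M P)
      \<le> I / ennreal (measure M P)"
    by (rule divide_right_mono_ennreal)
  moreover have "varp_pow M p f P = I / ennreal (measure M P)"
    unfolding varp_pow_def I_def using mP fin[OF P(1)] by simp
  ultimately show ?thesis
    using mP C(3) by (subst divide_ennreal[symmetric]) auto
qed

lemma partition_cell_meets_two_pieces:
  fixes B :: "'b \<Rightarrow> 'a set"
  assumes A: "emeasure M A < \<infinity>"
    and P: "l \<le> k" "\<forall>i<l. P i \<in> sets M" "disjoint_family_on P {..<l}" "(\<Union>i<l. P i) = A"
    and J: "finite J" "k < card J"
    and B: "\<And>j. j \<in> J \<Longrightarrow> B j \<in> sets M" "\<And>j. j \<in> J \<Longrightarrow> B j \<subseteq> A"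
      "\<And>j. j \<in> J \<Longrightarrow> b \<le> measure M (B j)"
    and b: "0 < b"
  obtains i j j' where "i < l" "j \<in> J" "j' \<in> J" "j \<noteq> j'"
    "b / k \<le> measure M (P i \<inter> B j)" "b / k \<le> measure M (P i \<inter> B j')"
proof -
  have "A \<in> sets M" using P by auto
  then have fin: "emeasure M X \<noteq> \<infinity>" if "X \<subseteq> A" for X
    using emeasure_mono[OF that, of M] A by (auto simp: top_unique)
  have "\<exists>i<l. b / k \<le> measure M (P i \<inter> B j)" if j: "j \<in> J" for j
  proof (rule ccontr)
    assume "\<not> ?thesis"
    then have small: "\<forall>i<l. measure M (P i \<inter> B j) < b / k" by auto
    have "B j = (\<Union>i<l. P i \<inter> B j)" using P(4) B(2)[OF j] by auto
    then have "measure M (B j) = measure M (\<Union>i<l. P i \<inter> B j)" by simp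
    also have "\<dots> = (\<Sum>i<l. measure M (P i \<inter> B j))"
    proof (rule measure_finite_Union)
      show "disjoint_family_on (\<lambda>i. P i \<inter> B j) {..<l}"
        using P(3) by (auto simp: disjoint_family_on_def)
      show "emeasure M (P i \<inter> B j) \<noteq> \<infinity>" for i
        using fin B(2)[OF j] by blast
    qed (use P B j in auto)
    also have "\<dots> < b"
    proof (cases "l = 0")
      case False
      then have "(\<Sum>i<l. measure M (P i \<inter> B j)) < (\<Sum>i<l. b / k)"
        using small by (intro sum_strict_mono) auto
      also have "\<dots> = l * (b / k)" by simp
      also have "\<dots> \<le> k * (b / k)" using P(1) b by (intro mult_right_mono) auto
      also have "\<dots> = b" using P(1) False by simp
      finally show ?thesis .
    qed (use b in simp)
    finally show False using B(3)[OF j] by simp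
  qed
  then obtain g where g: "\<forall>j\<in>J. g j < l \<and> b / k \<le> measure M (P (g j) \<inter> B j)"
    by metis
  have "\<not> inj_on g J"
  proof
    assume "inj_on g J"
    then have "card J \<le> card {..<l}" using g by (intro card_inj_on_le) auto
    then show False using J P(1) by simp
  qed
  then obtain j j' where "j \<in> J" "j' \<in> J" "j \<noteq> j'" "g j = g j'"
    by (auto simp: inj_on_def)
  with g show ?thesis using that[of "g j" j j'] by metis
qed

lemma Varpk_on_neq_0_of_separated_pieces:
  fixes f :: "'a \<Rightarrow> real" and B :: "'b \<Rightarrow> 'a set"
  assumes p: "0 < p" and k: "1 \<le> k"
    and A: "A \<in> sets M" "emeasure M A < \<infinity>"
    and J: "finite J" "k < card J"
    and B: "\<And>j. j \<in> J \<Longrightarrow> B j \<in> sets M" "\<And>j. j \<in> J \<Longrightarrow> B j \<subseteq> A"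
    and b: "0 < b" "\<And>j. j \<in> J \<Longrightarrow> b \<le> measure M (B j)"
    and d: "0 < d" "\<And>j j' x y. j \<in> J \<Longrightarrow> j' \<in> J \<Longrightarrow> j \<noteq> j' \<Longrightarrow> x \<in> B j \<Longrightarrow> y \<in> B j'
               \<Longrightarrow> d \<le> \<bar>f x - f y\<bar>"
  shows "Varpk_on M p k f A \<noteq> 0"
proof -
  have bk: "0 < b / k" using b k by auto
  obtain j0 where "j0 \<in> J" using J k by fastforce
  then have "measure M (B j0) \<le> measure M A"
    using A B by (intro measure_mono_fmeasurable) (auto simp: fmeasurable_def)
  then have mA: "0 < measure M A" using b \<open>j0 \<in> J\<close> by force
  define c where "c = d powr p * (b / k)^2 / measure M A"
  have c: "0 < c" unfolding c_def using d(1) bk mA k by (intro divide_pos_pos mult_pos_pos) auto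
  have "ennreal (c powr (1/p)) \<le> varp_fam M p f l P"
    if P: "l \<le> k" "\<forall>i<l. P i \<in> sets M" "disjoint_family_on P {..<l}" "(\<Union>i<l. P i) = A"
    for l P
  proof -
    obtain i j j' where ij: "i < l" "j \<in> J" "j' \<in> J" "j \<noteq> j'"
      and C: "b / k \<le> measure M (P i \<inter> B j)" and D: "b / k \<le> measure M (P i \<inter> B j')"
      by (rule partition_cell_meets_two_pieces[OF A(2) P J, of B b]) (use B b in auto)
    have Pi: "P i \<in> sets M" "P i \<subseteq> A" using P ij by auto
    have mP: "measure M (P i) \<le> measure M A"
      using Pi A by (intro measure_mono_fmeasurable) (auto simp: fmeasurable_def)
    have "emeasure M (P i) < \<infinity>"
      using emeasure_mono[OF Pi(2) A(1)] A(2) by simp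
    then have "ennreal (d powr p * measure M (P i \<inter> B j) * measure M (P i \<inter> B j') / measure M (P i))
        \<le> varp_pow M p f (P i)"
      using p Pi B ij C D bk d(1) d(2)[OF ij(2-4)]
      by (intro varp_pow_ge_separated) auto
    moreover have "c \<le> d powr p * measure M (P i \<inter> B j) * measure M (P i \<inter> B j') / measure M (P i)"
    proof -
      have "(b / k)^2 \<le> measure M (P i \<inter> B j) * measure M (P i \<inter> B j')"
        using mult_mono[OF C D] bk by (simp add: power2_eq_square)
      then have "d powr p * (b / k)^2 \<le> d powr p * measure M (P i \<inter> B j) * measure M (P i \<inter> B j')"
        unfolding mult.assoc by (rule mult_left_mono) simp
      moreover have "measure M (P i \<inter> B j) \<le> measure M (P i)"
        using Pi B(1)[OF ij(2)] \<open>emeasure M (P i) < \<infinity>\<close>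
        by (intro measure_mono_fmeasurable) (auto simp: fmeasurable_def)
      then have "0 < measure M (P i)" using C bk by linarith
      ultimately show ?thesis
        unfolding c_def using mP by (intro frac_le) auto
    qed
    ultimately have "ennreal c \<le> varp_pow M p f (P i)"
      by (meson ennreal_leI order_trans)
    also have "\<dots> \<le> (\<Sum>i<l. varp_pow M p f (P i))"
      using ij by (intro member_le_sum) auto
    finally show ?thesis
      unfolding varp_fam_def using c p by (intro ennreal_powr_le_enn_root)
  qed
  then have "ennreal (c powr (1/p)) \<le> Varpk_on M p k f A"
    unfolding Varpk_on_def by (intro INF_greatest) auto
  moreover have "0 < c powr (1/p)" using c by simp
  ultimately show ?thesis by (metis ennreal_eq_0_iff not_le order_antisym zero_le)
qed

lemma Varpk_on_le_Varpk:
  "A \<in> sets M \<Longrightarrow> emeasure M A < \<infinity> \<Longrightarrow> Varpk_on M p k f A \<le> Varpk M p k f"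
  unfolding Varpk_def by (intro SUP_upper) auto

lemma Varpk_neq_0_of_separated_clusters:
  fixes f :: "'a \<Rightarrow> real" and W :: "real set"
  assumes p: "0 < p" and k: "1 \<le> k"
    and W: "finite W" "k < card W"
    and r: "0 < r" "\<And>w w'. w \<in> W \<Longrightarrow> w' \<in> W \<Longrightarrow> w \<noteq> w' \<Longrightarrow> 3 * r \<le> \<bar>w - w'\<bar>"
    and B: "\<And>w. w \<in> W \<Longrightarrow> B w \<in> sets M" "\<And>w. w \<in> W \<Longrightarrow> 0 < emeasure M (B w)"
      "\<And>w. w \<in> W \<Longrightarrow> emeasure M (B w) < \<infinity>" "\<And>w x. w \<in> W \<Longrightarrow> x \<in> B w \<Longrightarrow> \<bar>f x - w\<bar> < r"
  shows "Varpk M p k f \<noteq> 0"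
proof -
  define A where "A = (\<Union>w\<in>W. B w)"
  have A: "A \<in> sets M" unfolding A_def using B W by auto
  have "emeasure M A \<le> (\<Sum>w\<in>W. emeasure M (B w))"
    unfolding A_def using W B by (intro emeasure_subadditive_finite) auto
  also have "\<dots> < \<infinity>" using B W by (simp add: sum_Pinfty less_top)
  finally have A_fin: "emeasure M A < \<infinity>" .
  have mB: "0 < measure M (B w)" if "w \<in> W" for w
    using B(2,3)[OF that] by (simp add: emeasure_eq_ennreal_measure less_top ennreal_less_zero_iff)
  define b where "b = Min ((\<lambda>w. measure M (B w)) ` W)"
  have "W \<noteq> {}" using W by auto
  then have b: "0 < b" unfolding b_def using W mB by (subst Min_gr_iff) auto
  have "Varpk_on M p k f A \<noteq> 0"
  proof (rule Varpk_on_neq_0_of_separated_pieces[where J = W and B = B and b = b and d = r])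
    show "b \<le> measure M (B w)" if "w \<in> W" for w unfolding b_def using W that by auto
    show "r \<le> \<bar>f x - f y\<bar>"
      if "w \<in> W" "w' \<in> W" "w \<noteq> w'" "x \<in> B w" "y \<in> B w'" for w w' x y
      using r(2)[of w w'] B(4)[of w x] B(4)[of w' y] that by linarith
  qed (use p k A A_fin W B b r in \<open>auto simp: A_def\<close>)
  then show ?thesis
    using Varpk_on_le_Varpk[OF A A_fin, of p k f] by (metis le_zero_eq)
qed

lemma emeasure_abs_ge_finite_if_Lp:
  fixes f :: "'a \<Rightarrow> real"
  assumes "Lp M p f" "0 < c" "0 < p"
  shows "emeasure M {x \<in> space M. c \<le> \<bar>f x\<bar>} < \<infinity>"
proof -
  define E where "E = {x \<in> space M. c \<le> \<bar>f x\<bar>}"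
  have fm: "f \<in> borel_measurable M" and int: "integrable M (\<lambda>x. \<bar>f x\<bar> powr p)"
    using assms(1) by (auto simp: Lp_def)
  have E: "E \<in> sets M" unfolding E_def using fm by measurable
  have "ennreal (c powr p) * emeasure M E = (\<integral>\<^sup>+x. ennreal (c powr p) * indicator E x \<partial>M)"
    using nn_integral_cmult_indicator[OF E] by simp
  also have "\<dots> \<le> (\<integral>\<^sup>+x. ennreal (norm (\<bar>f x\<bar> powr p)) \<partial>M)"
  proof (intro nn_integral_mono)
    fix x
    show "ennreal (c powr p) * indicator E x \<le> ennreal (norm (\<bar>f x\<bar> powr p))"
    proof (cases "x \<in> E")
      case True
      then have "c powr p \<le> \<bar>f x\<bar> powr p" using assms unfolding E_def by (intro powr_mono2) auto
      then show ?thesis using True by (auto intro: ennreal_leI)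
    qed auto
  qed
  also have "\<dots> < \<infinity>" using int by (simp add: integrable_iff_bounded)
  finally show ?thesis
    using assms(2) unfolding E_def[symmetric] by (auto simp: ennreal_mult_less_top)
qed

lemma finite_imp_uniformly_separated:
  fixes W :: "real set"
  assumes "finite W"
  shows "\<exists>r>0. \<forall>u\<in>W. \<forall>v\<in>W. u \<noteq> v \<longrightarrow> r \<le> \<bar>u - v\<bar>"
proof -
  define D where "D = (\<lambda>(u,v). \<bar>u - v\<bar>) ` {(u,v). u \<in> W \<and> v \<in> W \<and> u \<noteq> v}"
  have "finite D" unfolding D_def
    by (rule finite_imageI, rule finite_subset[of _ "W \<times> W"]) (use assms in auto)
  show ?thesis
  proof (cases "D = {}")
    case True
    then show ?thesis by (intro exI[of _ 1]) (auto simp: D_def)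
  next
    case False
    show ?thesis
    proof (intro exI[of _ "Min D"] conjI ballI impI)
      show "0 < Min D" using \<open>finite D\<close> False by (subst Min_gr_iff) (auto simp: D_def)
      show "Min D \<le> \<bar>u - v\<bar>" if "u \<in> W" "v \<in> W" "u \<noteq> v" for u v
        using \<open>finite D\<close> that unfolding D_def by (intro Min_le) force+
    qed
  qed
qed

definition nonzero_ess_range :: "'a measure \<Rightarrow> ('a \<Rightarrow> real) \<Rightarrow> real set" where
  "nonzero_ess_range M f = {v. v \<noteq> 0 \<and> (\<forall>e>0. 0 < emeasure M {x \<in> space M. \<bar>f x - v\<bar> < e})}"

lemma AE_in_ess_range:
  fixes f :: "'a \<Rightarrow> real"
  assumes fm: "f \<in> borel_measurable M"
  shows "AE x in M. f x \<in> insert 0 (nonzero_ess_range M f)"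
proof -
  define Q where "Q = {z. fst z \<in> \<rat> \<and> snd z \<in> \<rat> \<and> 0 < snd z \<and>
      emeasure M {x \<in> space M. \<bar>f x - fst z\<bar> < snd z} = 0}"
  define N where "N = (\<Union>z\<in>Q. {x \<in> space M. \<bar>f x - fst z\<bar> < snd z})"
  have "countable Q"
    by (rule countable_subset[of _ "\<rat> \<times> \<rat>"]) (auto simp: Q_def countable_rat)
  then have N: "N \<in> null_sets M"
    unfolding N_def using fm by (intro null_sets_UN') (auto simp: Q_def null_sets_def)
  show ?thesis
  proof (rule AE_I'[OF N], rule subsetI)
    fix x assume "x \<in> {x \<in> space M. f x \<notin> insert 0 (nonzero_ess_range M f)}"
    then have x: "x \<in> space M" "f x \<noteq> 0" "f x \<notin> nonzero_ess_range M f" by auto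
    then obtain e where e: "0 < e" "emeasure M {y \<in> space M. \<bar>f y - f x\<bar> < e} = 0"
      by (auto simp: nonzero_ess_range_def not_less)
    obtain q where q: "q \<in> \<rat>" "f x - e/3 < q" "q < f x + e/3"
      using Rats_dense_in_real[of "f x - e/3" "f x + e/3"] e by auto
    obtain e' where e': "e' \<in> \<rat>" "e/3 < e'" "e' < e/2"
      using Rats_dense_in_real[of "e/3" "e/2"] e by auto
    \<comment> \<open>a rational ball around the value f x that is still null\<close>
    have "emeasure M {y \<in> space M. \<bar>f y - q\<bar> < e'} \<le> emeasure M {y \<in> space M. \<bar>f y - f x\<bar> < e}"
      using q e' fm by (intro emeasure_mono) auto
    then have "(q, e') \<in> Q" using e q e' by (auto simp: Q_def)
    moreover have "\<bar>f x - q\<bar> < e'" using q e' by linarith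
    ultimately show "x \<in> N" unfolding N_def using x by force
  qed
qed

lemma nonzero_ess_range_ball:
  fixes f :: "'a \<Rightarrow> real"
  assumes Lp: "Lp M p f" and p: "0 < p" and w: "w \<in> nonzero_ess_range M f"
    and r: "0 < r" "r < \<bar>w\<bar>"
  shows "{x \<in> space M. \<bar>f x - w\<bar> < r} \<in> sets M"
    "0 < emeasure M {x \<in> space M. \<bar>f x - w\<bar> < r}"
    "emeasure M {x \<in> space M. \<bar>f x - w\<bar> < r} < \<infinity>"
proof -
  have fm: "f \<in> borel_measurable M" using Lp by (simp add: Lp_def)
  show "{x \<in> space M. \<bar>f x - w\<bar> < r} \<in> sets M" using fm by measurable
  show "0 < emeasure M {x \<in> space M. \<bar>f x - w\<bar> < r}"
    using w r by (auto simp: nonzero_ess_range_def)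
  have "emeasure M {x \<in> space M. \<bar>f x - w\<bar> < r} \<le> emeasure M {x \<in> space M. \<bar>w\<bar> - r \<le> \<bar>f x\<bar>}"
    using fm by (intro emeasure_mono) auto
  also have "\<dots> < \<infinity>" using r by (intro emeasure_abs_ge_finite_if_Lp[OF Lp _ p]) auto
  finally show "emeasure M {x \<in> space M. \<bar>f x - w\<bar> < r} < \<infinity>" .
qed

lemma card_nonzero_ess_range_le:
  fixes f :: "'a \<Rightarrow> real"
  assumes Lp: "Lp M p f" and p: "0 < p" and k: "1 \<le> k" and V: "Varpk M p k f = 0"
  shows "finite (nonzero_ess_range M f)" "card (nonzero_ess_range M f) \<le> k"
proof -
  have "finite (nonzero_ess_range M f) \<and> card (nonzero_ess_range M f) \<le> k"
  proof (rule ccontr)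
    assume "\<not> ?thesis"
    then obtain W where W: "finite W" "card W = Suc k" "W \<subseteq> nonzero_ess_range M f"
      by (metis infinite_arbitrarily_large not_less_eq_eq obtain_subset_with_card_n)
    obtain r0 where r0: "0 < r0" "\<forall>u\<in>insert 0 W. \<forall>v\<in>insert 0 W. u \<noteq> v \<longrightarrow> r0 \<le> \<bar>u - v\<bar>"
      using finite_imp_uniformly_separated[of "insert 0 W"] W by auto
    define r where "r = r0 / 3"
    have r: "0 < r" "\<And>u v. u \<in> insert 0 W \<Longrightarrow> v \<in> insert 0 W \<Longrightarrow> u \<noteq> v \<Longrightarrow> 3 * r \<le> \<bar>u - v\<bar>"
      using r0 by (auto simp: r_def)
    have rw: "r < \<bar>w\<bar>" if "w \<in> W" for w
      using r(2)[of w 0] that W(3) \<open>0 < r\<close> by (force simp: nonzero_ess_range_def)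
    have "Varpk M p k f \<noteq> 0"
      by (rule Varpk_neq_0_of_separated_clusters[OF p k W(1) _ r(1), 
            where B = "\<lambda>w. {x \<in> space M. \<bar>f x - w\<bar> < r}"])
        (use W r rw nonzero_ess_range_ball[OF Lp p _ r(1)] in auto)
    then show False using V by simp
  qed
  then show "finite (nonzero_ess_range M f)" "card (nonzero_ess_range M f) \<le> k" by auto
qed

lemma sum_indicator_eq_single:
  fixes a :: "nat \<Rightarrow> real"
  assumes "j < n" "x \<in> A j" "\<And>i. i < n \<Longrightarrow> i \<noteq> j \<Longrightarrow> x \<notin> A i"
  shows "(\<Sum>i<n. a i * indicator (A i) x) = a j"
proof -
  have "(\<Sum>i<n. a i * indicator (A i) x) = (\<Sum>i<n. if i = j then a j else 0)"
    using assms by (intro sum.cong) (auto simp: indicator_def)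
  also have "\<dots> = a j" using assms(1) by simp
  finally show ?thesis .
qed

lemma sets_Collect_in_finite:
  fixes f :: "'a \<Rightarrow> real"
  assumes "f \<in> borel_measurable M" "finite T"
  shows "{x \<in> space M. f x \<in> T} \<in> sets M"
  using measurable_sets[OF assms(1), of T] assms(2)
  by (simp add: borel_closed finite_imp_closed Int_def conj_commute set_eq_iff)

lemma Gset_if_AE_finite_range:
  fixes f :: "'a \<Rightarrow> real"
  assumes Lp: "Lp M p f" and T: "finite T" "T \<noteq> {}" "card T \<le> m"
    and AE: "AE x in M. f x \<in> T"
  shows "f \<in> Gset M p m"
proof -
  have fm: "f \<in> borel_measurable M" using Lp by (simp add: Lp_def)
  define n where "n = card T"
  obtain h where h: "bij_betw h {..<n} T"
    using ex_bij_betw_nat_finite[OF T(1)] by (auto simp: n_def atLeast0LessThan)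
  then have hinj: "inj_on h {..<n}" and himg: "h ` {..<n} = T" by (auto simp: bij_betw_def)
  have "0 < n" using T by (simp add: n_def card_gt_0_iff)
  \<comment> \<open>redefining f off T on a null set makes the level sets cover the whole space\<close>
  define g where "g x = (if f x \<in> T then f x else h 0)" for x
  have [measurable]: "{x \<in> space M. f x \<in> T} \<in> sets M"
    using fm T(1) by (rule sets_Collect_in_finite)
  have [measurable]: "g \<in> borel_measurable M" unfolding g_def using fm by measurable
  have gT: "g x \<in> T" for x using himg \<open>0 < n\<close> unfolding g_def by auto
  define A where "A i = {x \<in> space M. g x = h i}" for i
  have A_sets: "\<forall>i<n. A i \<in> sets M" unfolding A_def by (intro allI impI) measurable
  have disj: "disjoint_family_on A {..<n}"
    unfolding disjoint_family_on_def A_def using hinj by (auto simp: inj_on_def)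
  have cover: "(\<Union>i<n. A i) = space M"
    unfolding A_def using gT himg by (fastforce simp: image_iff)
  have "AE x in M. f x = (\<Sum>i<n. h i * indicator (A i) x)"
    using AE
  proof (rule AE_mp, intro AE_I2 impI)
    fix x assume x: "x \<in> space M" "f x \<in> T"
    then obtain j where j: "j < n" "h j = f x" using himg by (metis imageE lessThan_iff)
    have "(\<Sum>i<n. h i * indicator (A i) x) = h j"
      using x j hinj by (intro sum_indicator_eq_single) (auto simp: A_def g_def inj_on_def)
    then show "f x = (\<Sum>i<n. h i * indicator (A i) x)" using j by simp
  qed
  then show ?thesis
    unfolding Gset_def using Lp T(3) A_sets disj cover n_def by blast
qed

lemma varp_pow_eq_0_if_AE_const:
  assumes "AE x in M. x \<in> A \<longrightarrow> f x = c"
  shows "varp_pow M p f A = 0"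
proof -
  have inner: "(\<integral>\<^sup>+ y. indicator (A \<times> A) (x, y) * ennreal (\<bar>f x - f y\<bar> powr p) \<partial>M) = 0"
    if "x \<in> A \<longrightarrow> f x = c" for x
  proof -
    have "AE y in M. indicator (A \<times> A) (x, y) * ennreal (\<bar>f x - f y\<bar> powr p) = 0"
      using assms by eventually_elim (use that in \<open>auto simp: indicator_def\<close>)
    then have "(\<integral>\<^sup>+ y. indicator (A \<times> A) (x, y) * ennreal (\<bar>f x - f y\<bar> powr p) \<partial>M)
        = (\<integral>\<^sup>+ y. 0 \<partial>M)"
      by (rule nn_integral_cong_AE)
    then show ?thesis by simp
  qed
  have "AE x in M. (\<integral>\<^sup>+ y. indicator (A \<times> A) (x, y) * ennreal (\<bar>f x - f y\<bar> powr p) \<partial>M) = 0"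
    using assms by eventually_elim (rule inner)
  then have "(\<integral>\<^sup>+ x. (\<integral>\<^sup>+ y. indicator (A \<times> A) (x, y) * ennreal (\<bar>f x - f y\<bar> powr p) \<partial>M) \<partial>M)
      = (\<integral>\<^sup>+ x. 0 \<partial>M)"
    by (rule nn_integral_cong_AE)
  then show ?thesis
    unfolding varp_pow_def by simp
qed

lemma Varpk_eq_0_if_Gset:
  fixes f :: "'a \<Rightarrow> real"
  assumes "f \<in> Gset M p k"
  shows "Varpk M p k f = 0"
proof -
  obtain l A a where l: "l \<le> k" "\<forall>i<l. A i \<in> sets M" "disjoint_family_on A {..<l}"
    "(\<Union>i<l. A i) = space M" "AE x in M. f x = (\<Sum>i<l. a i * indicator (A i) x)"
    using assms unfolding Gset_def by blast
  have const: "AE x in M. x \<in> A i \<longrightarrow> f x = a i" if "i < l" for i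
    using l(5)
  proof (rule AE_mp, intro AE_I2 impI)
    fix x assume "f x = (\<Sum>i<l. a i * indicator (A i) x)" "x \<in> A i"
    moreover have "(\<Sum>i<l. a i * indicator (A i) x) = a i"
      using that \<open>x \<in> A i\<close> l(3) by (intro sum_indicator_eq_single) (auto simp: disjoint_family_on_def)
    ultimately show "f x = a i" by simp
  qed
  have "Varpk_on M p k f E = 0" if E: "E \<in> sets M" for E
  proof -
    have "Varpk_on M p k f E \<le> varp_fam M p f l (\<lambda>i. E \<inter> A i)"
      unfolding Varpk_on_def
      using l E sets.sets_into_space[OF E]
      by (intro INF_lower2[of "(l, \<lambda>i. E \<inter> A i)"]) (auto simp: disjoint_family_on_def)
    also have "\<dots> = 0"
    proof -
      have "varp_pow M p f (E \<inter> A i) = 0" if "i < l" for i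
      proof (rule varp_pow_eq_0_if_AE_const)
        show "AE x in M. x \<in> E \<inter> A i \<longrightarrow> f x = a i"
          using const[OF that] by eventually_elim auto
      qed
      then show ?thesis unfolding varp_fam_def by simp
    qed
    finally show ?thesis by simp
  qed
  then have "Varpk M p k f \<le> 0"
    unfolding Varpk_def by (intro SUP_least) auto
  then show ?thesis by simp
qed

lemma obtain_finite_positive_subset:
  assumes "\<forall>A. is_atom M A \<longrightarrow> emeasure M A < \<infinity>" "Z \<in> sets M" "emeasure M Z \<noteq> 0"
  obtains Z' where "Z' \<in> sets M" "Z' \<subseteq> Z" "0 < emeasure M Z'" "emeasure M Z' < \<infinity>"
proof (cases "emeasure M Z < \<infinity>")
  case True
  then show ?thesis using that[of Z] assms by (auto simp: zero_less_iff_neq_zero)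
next
  case False
  then have "\<not> is_atom M Z" using assms(1) by auto
  then obtain B where "B \<in> sets M" "B \<subseteq> Z" "emeasure M B < emeasure M Z" "emeasure M B \<noteq> 0"
    using assms(2,3) unfolding is_atom_def by (auto simp: zero_less_iff_neq_zero)
  then show ?thesis
    using that[of B] False by (auto simp: zero_less_iff_neq_zero not_less top_unique)
qed

lemma AE_in_nonzero_ess_range_if_card_eq:
  fixes f :: "'a \<Rightarrow> real"
  assumes Lp: "Lp M p f" and p: "0 < p" and k: "1 \<le> k" and V: "Varpk M p k f = 0"
    and no_atom: "\<forall>A. is_atom M A \<longrightarrow> emeasure M A < \<infinity>"
    and card: "card (nonzero_ess_range M f) = k"
  shows "AE x in M. f x \<in> nonzero_ess_range M f"
proof (rule ccontr)
  define E where "E = nonzero_ess_range M f"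
  have fm: "f \<in> borel_measurable M" using Lp by (simp add: Lp_def)
  have E: "finite E" "0 \<notin> E"
    using card_nonzero_ess_range_le[OF Lp p k V] by (auto simp: E_def nonzero_ess_range_def)
  define Z where "Z = {x \<in> space M. f x \<notin> E}"
  have Z: "Z \<in> sets M"
    using sets_Collect_in_finite[OF fm E(1)] by (auto simp: Z_def Collect_neg_eq Diff_eq)
  assume "\<not> (AE x in M. f x \<in> nonzero_ess_range M f)"
  then have "emeasure M Z \<noteq> 0" using AE_iff_measurable[OF Z] by (auto simp: Z_def E_def)
  then obtain Z' where Z': "Z' \<in> sets M" "Z' \<subseteq> Z" "0 < emeasure M Z'" "emeasure M Z' < \<infinity>"
    using obtain_finite_positive_subset[OF no_atom Z] by blast
  \<comment> \<open>outside the nonzero essential range f vanishes a.e., so Z' is a cluster at the value 0\<close>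
  define B0 where "B0 = Z' \<inter> {x \<in> space M. f x = 0}"
  have B0: "B0 \<in> sets M" unfolding B0_def using Z' fm by measurable
  have "AE x in M. x \<in> B0 \<longleftrightarrow> x \<in> Z'"
    using AE_in_ess_range[OF fm] by eventually_elim (use Z' in \<open>auto simp: B0_def Z_def E_def\<close>)
  then have mB0: "emeasure M B0 = emeasure M Z'" using B0 Z' by (intro emeasure_eq_AE) auto
  define W where "W = insert 0 E"
  have W: "finite W" "k < card W" using E card by (auto simp: W_def E_def)
  obtain r0 where r0: "0 < r0" "\<forall>u\<in>W. \<forall>v\<in>W. u \<noteq> v \<longrightarrow> r0 \<le> \<bar>u - v\<bar>"
    using finite_imp_uniformly_separated[OF W(1)] by auto
  define r where "r = r0 / 3"
  have r: "0 < r" "\<And>u v. u \<in> W \<Longrightarrow> v \<in> W \<Longrightarrow> u \<noteq> v \<Longrightarrow> 3 * r \<le> \<bar>u - v\<bar>"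
    using r0 by (auto simp: r_def)
  have rw: "r < \<bar>w\<bar>" if "w \<in> E" for w
    using r(2)[of w 0] r(1) E(2) that by (force simp: W_def)
  define B where "B w = (if w = 0 then B0 else {x \<in> space M. \<bar>f x - w\<bar> < r})" for w
  have cluster: "B w \<in> sets M \<and> 0 < emeasure M (B w) \<and> emeasure M (B w) < \<infinity> \<and>
      (\<forall>x \<in> B w. \<bar>f x - w\<bar> < r)" if "w \<in> W" for w
  proof (cases "w = 0")
    case True
    then show ?thesis using B0 mB0 Z'(3,4) r(1) by (simp add: B_def B0_def)
  next
    case False
    then have "w \<in> E" using that by (simp add: W_def)
    then show ?thesis
      using False nonzero_ess_range_ball[OF Lp p _ r(1) rw, of w] by (simp add: B_def E_def)
  qed
  have "Varpk M p k f \<noteq> 0"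
    by (rule Varpk_neq_0_of_separated_clusters[OF p k W r, where B = B]) (use cluster in blast)+
  then show False using V by simp
qed

lemma Gset_if_Varpk_eq_0_no_infinite_atoms:
  fixes f :: "'a \<Rightarrow> real"
  assumes Lp: "Lp M p f" and p: "0 < p" and k: "1 \<le> k" and V: "Varpk M p k f = 0"
    and no_atom: "\<forall>A. is_atom M A \<longrightarrow> emeasure M A < \<infinity>"
  shows "f \<in> Gset M p k"
proof -
  define E where "E = nonzero_ess_range M f"
  have E: "finite E" "card E \<le> k" "0 \<notin> E"
    using card_nonzero_ess_range_le[OF Lp p k V] by (auto simp: E_def nonzero_ess_range_def)
  have fm: "f \<in> borel_measurable M" using Lp by (simp add: Lp_def)
  show ?thesis
  proof (cases "card E < k")
    case True
    then have "card (insert 0 E) \<le> k" using E by (simp add: card_insert_if)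
    then show ?thesis
      using Gset_if_AE_finite_range[OF Lp, of "insert 0 E"] E AE_in_ess_range[OF fm]
      by (auto simp: E_def)
  next
    case False
    then have "card E = k" using E by simp
    moreover from this have "E \<noteq> {}" using k by auto
    ultimately show ?thesis
      using Gset_if_AE_finite_range[OF Lp E(1)]
        AE_in_nonzero_ess_range_if_card_eq[OF Lp p k V no_atom]
      by (simp add: E_def)
  qed
qed

theorem proposition3p7:
  fixes M :: "'a measure" and p :: real and k :: nat
  assumes "emeasure M (space M) \<noteq> 0"
    and "1 \<le> p" and "1 \<le> k"
  shows "Gset M p k \<subseteq> {f. Lp M p f \<and> Varpk M p k f = 0}
       \<and> {f. Lp M p f \<and> Varpk M p k f = 0} \<subseteq> Gset M p (k + 1)
       \<and> ((\<forall>A. is_atom M A \<longrightarrow> emeasure M A < \<infinity>) \<longrightarrow>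
            {f. Lp M p f \<and> Varpk M p k f = 0} = Gset M p k)"
proof -
  have p: "0 < p" using assms by simp
  have G_sub: "Gset M p k \<subseteq> {f. Lp M p f \<and> Varpk M p k f = 0}"
  proof (intro subsetI CollectI conjI)
    fix f assume f: "f \<in> Gset M p k"
    then show "Lp M p f" by (simp add: Gset_def)
    show "Varpk M p k f = 0" using f by (rule Varpk_eq_0_if_Gset)
  qed
  have "f \<in> Gset M p (k + 1)" if f: "Lp M p f" "Varpk M p k f = 0" for f
  proof -
    have fm: "f \<in> borel_measurable M" using f by (simp add: Lp_def)
    note E = card_nonzero_ess_range_le[OF f(1) p assms(3) f(2)]
    then have "card (insert 0 (nonzero_ess_range M f)) \<le> k + 1" by (simp add: card_insert_if)
    then show ?thesis
      using E AE_in_ess_range[OF fm] by (intro Gset_if_AE_finite_range[OF f(1)]) auto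
  qed
  moreover have "{f. Lp M p f \<and> Varpk M p k f = 0} \<subseteq> Gset M p k"
    if "\<forall>A. is_atom M A \<longrightarrow> emeasure M A < \<infinity>"
    using Gset_if_Varpk_eq_0_no_infinite_atoms[OF _ p assms(3) _ that] by blast
  ultimately show ?thesis using G_sub by blast
qed

end
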